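(* Let $(X,\tau)$ be an extended locally convex space. Then there exists a locally convex topology $\tau_F$ on $X$ with the following properties: (a) $\tau_F\subseteq\tau$; (b) if $\sigma$ is any locally convex topology on $X$ with $\sigma\subseteq\tau$, then $\sigma\subseteq\tau_F$.
   Context: Let $X$ be a vector space over $\mathbb{R}$ or $\mathbb{C}$. An extended seminorm on $X$ is a map $\rho:X\to[0,\infty]$ with $\rho(\alpha x)=|\alpha|\rho(x)$ for all scalars $\alpha$ and $x\in X$ (with $0\cdot\infty=0$), and $\rho(x+y)\le\rho(x)+\rho(y)$. An extended locally convex space (elcs) is a pair $(X,\tau)$ where $\tau$ is the topology on $X$ induced by some family $\{\rho_i\}_{i\in I}$ of extended seminorms, i.e. a neighborhood base at each $x_0\in X$ is formed by the sets $\{x:\max_{i\in J}\rho_i(x-x_0)<\varepsilon\}$, $J\subseteq I$ finite, $\varepsilon>0$. (This is equivalent to the Salas–García definition: a group topology that is the supremum of a family of "fundamental" extended locally convex topologies, each making $X$ topologically the product of a locally convex subspace and a discrete subspace.) A locally convex topology on $X$ is a topology induced in the same way by a family of finite-valued seminorms (Hausdorffness not assumed). *)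

theory Defs
  imports "HOL-Analysis.Analysis"
begin

text \<open>Vector space structure is given by a scalar multiplication s :: 'k => 'a => 'a
(with vector_space s); the scalar field is real or complex, |alpha| is norm alpha.
Topologies on the whole space X = UNIV are represented by their collections of open sets.\<close>

definition ext_seminorm :: "('k::real_normed_field \<Rightarrow> 'a::ab_group_add \<Rightarrow> 'a) \<Rightarrow> ('a \<Rightarrow> ennreal) \<Rightarrow> bool" where
  "ext_seminorm s \<rho> \<longleftrightarrow>
     (\<forall>\<alpha> x. \<rho> (s \<alpha> x) = ennreal (norm \<alpha>) * \<rho> x) \<and>
     (\<forall>x y. \<rho> (x + y) \<le> \<rho> x + \<rho> y)"

definition seminorm :: "('k::real_normed_field \<Rightarrow> 'a::ab_group_add \<Rightarrow> 'a) \<Rightarrow> ('a \<Rightarrow> ennreal) \<Rightarrow> bool" where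
  "seminorm s \<rho> \<longleftrightarrow> ext_seminorm s \<rho> \<and> (\<forall>x. \<rho> x < \<infinity>)"

definition induced_topology :: "('a::ab_group_add \<Rightarrow> ennreal) set \<Rightarrow> 'a set set" where
  "induced_topology P = {U. \<forall>x0\<in>U. \<exists>J \<epsilon>. finite J \<and> J \<subseteq> P \<and> \<epsilon> > 0 \<and>
       {x. \<forall>\<rho>\<in>J. \<rho> (x - x0) < \<epsilon>} \<subseteq> U}"

definition is_elcs :: "('k::real_normed_field \<Rightarrow> 'a::ab_group_add \<Rightarrow> 'a) \<Rightarrow> 'a set set \<Rightarrow> bool" where
  "is_elcs s \<tau> \<longleftrightarrow> (\<exists>P. (\<forall>\<rho>\<in>P. ext_seminorm s \<rho>) \<and> \<tau> = induced_topology P)"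

definition is_lc_topology :: "('k::real_normed_field \<Rightarrow> 'a::ab_group_add \<Rightarrow> 'a) \<Rightarrow> 'a set set \<Rightarrow> bool" where
  "is_lc_topology s \<sigma> \<longleftrightarrow> (\<exists>P. (\<forall>\<rho>\<in>P. seminorm s \<rho>) \<and> \<sigma> = induced_topology P)"

end

theory Submission
  imports Defs
begin

text \<open>The finest locally convex topology below \<open>\<tau>\<close> is the one generated by all finite-valued
  seminorms whose balls are \<open>\<tau>\<close>-open. Every locally convex \<open>\<sigma> \<subseteq> \<tau>\<close> is generated by such
  seminorms, since balls of a seminorm are open in the topology it generates; conversely this
  topology lies in \<open>\<tau>\<close>, because its basic neighbourhoods are finite intersections of \<open>\<tau>\<close>-open
  balls.\<close>

definition continuous_seminorms ::
    "('k::real_normed_field \<Rightarrow> 'a::ab_group_add \<Rightarrow> 'a) \<Rightarrow> 'a set set \<Rightarrow> ('a \<Rightarrow> ennreal) set" where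
  "continuous_seminorms s \<tau> = {\<rho>. seminorm s \<rho> \<and> (\<forall>x0 \<epsilon>. {x. \<rho> (x - x0) < \<epsilon>} \<in> \<tau>)}"

lemma ext_seminorm_zero:
  assumes "vector_space s" "ext_seminorm s \<rho>"
  shows "\<rho> 0 = 0"
proof -
  interpret vector_space s by (rule assms(1))
  have "\<rho> (s 0 0) = ennreal (norm (0::'a)) * \<rho> 0"
    using assms(2) unfolding ext_seminorm_def by blast
  then show ?thesis by simp
qed

lemma UNIV_in_induced_topology: "UNIV \<in> induced_topology P"
  unfolding induced_topology_def
  by (auto intro!: exI[of _ "{}"] exI[of _ "1::ennreal"])

lemma Int_in_induced_topology:
  assumes "U \<in> induced_topology P" "V \<in> induced_topology P"
  shows "U \<inter> V \<in> induced_topology P"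
  unfolding induced_topology_def
proof (intro CollectI ballI)
  fix x0 assume "x0 \<in> U \<inter> V"
  then obtain J \<epsilon> K \<delta> where J: "finite J" "J \<subseteq> P" "\<epsilon> > 0" "{x. \<forall>\<rho>\<in>J. \<rho> (x - x0) < \<epsilon>} \<subseteq> U"
    and K: "finite K" "K \<subseteq> P" "\<delta> > 0" "{x. \<forall>\<rho>\<in>K. \<rho> (x - x0) < \<delta>} \<subseteq> V"
    using assms unfolding induced_topology_def by blast
  have "{x. \<forall>\<rho>\<in>J \<union> K. \<rho> (x - x0) < min \<epsilon> \<delta>} \<subseteq> U \<inter> V"
    using J(4) K(4) by auto
  with J K show "\<exists>L \<eta>. finite L \<and> L \<subseteq> P \<and> \<eta> > 0 \<and> {x. \<forall>\<rho>\<in>L. \<rho> (x - x0) < \<eta>} \<subseteq> U \<inter> V"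
    by (intro exI[of _ "J \<union> K"] exI[of _ "min \<epsilon> \<delta>"]) auto
qed

lemma Inter_in_induced_topology:
  assumes "finite F" "F \<subseteq> induced_topology P"
  shows "\<Inter>F \<in> induced_topology P"
  using assms
  by (induction F rule: finite_induct) (auto simp: UNIV_in_induced_topology Int_in_induced_topology)

lemma induced_topology_mono:
  assumes "R \<subseteq> Q"
  shows "induced_topology R \<subseteq> induced_topology Q"
  unfolding induced_topology_def
proof (intro subsetI CollectI ballI)
  fix U x0 assume "U \<in> {U. \<forall>x0\<in>U. \<exists>J \<epsilon>. finite J \<and> J \<subseteq> R \<and> \<epsilon> > 0 \<and>
       {x. \<forall>\<rho>\<in>J. \<rho> (x - x0) < \<epsilon>} \<subseteq> U}" "x0 \<in> U"
  then obtain J \<epsilon> where "finite J" "J \<subseteq> R" "\<epsilon> > 0" "{x. \<forall>\<rho>\<in>J. \<rho> (x - x0) < \<epsilon>} \<subseteq> U"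
    by blast
  with assms show "\<exists>J \<epsilon>. finite J \<and> J \<subseteq> Q \<and> \<epsilon> > 0 \<and> {x. \<forall>\<rho>\<in>J. \<rho> (x - x0) < \<epsilon>} \<subseteq> U"
    by (meson subset_trans)
qed

lemma ball_in_induced_topology:
  assumes triangle: "\<forall>x y. \<rho> (x + y) \<le> \<rho> x + \<rho> y" and "\<rho> \<in> P"
  shows "{x. \<rho> (x - x0) < \<epsilon>} \<in> induced_topology P"
  unfolding induced_topology_def
proof (intro CollectI ballI)
  fix x1 assume "x1 \<in> {x. \<rho> (x - x0) < \<epsilon>}"
  then have x1: "\<rho> (x1 - x0) < \<epsilon>" by simp
  define \<delta> where "\<delta> = \<epsilon> - \<rho> (x1 - x0)"
  have "\<delta> > 0"
    using x1 unfolding \<delta>_def by (simp add: diff_gr0_ennreal)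
  have finite_dist: "\<rho> (x1 - x0) < top"
    using x1 by (meson order_less_le_trans top_greatest)
  have "{x. \<rho> (x - x1) < \<delta>} \<subseteq> {x. \<rho> (x - x0) < \<epsilon>}"
  proof
    fix x assume "x \<in> {x. \<rho> (x - x1) < \<delta>}"
    then have "\<rho> (x - x1) + \<rho> (x1 - x0) < \<epsilon>"
      using finite_dist unfolding \<delta>_def by (simp add: less_diff_eq_ennreal)
    moreover have "\<rho> (x - x0) \<le> \<rho> (x - x1) + \<rho> (x1 - x0)"
      using triangle[rule_format, of "x - x1" "x1 - x0"] by simp
    ultimately show "x \<in> {x. \<rho> (x - x0) < \<epsilon>}" by simp
  qed
  with \<open>\<delta> > 0\<close> show "\<exists>J \<eta>. finite J \<and> J \<subseteq> P \<and> \<eta> > 0 \<and>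
      {x. \<forall>\<rho>\<in>J. \<rho> (x - x1) < \<eta>} \<subseteq> {x. \<rho> (x - x0) < \<epsilon>}"
    using \<open>\<rho> \<in> P\<close> by (intro exI[of _ "{\<rho>}"] exI[of _ \<delta>]) auto
qed

lemma induced_topology_subset_if_balls_open:
  assumes zero: "\<And>\<rho>. \<rho> \<in> Q \<Longrightarrow> \<rho> 0 = 0"
    and balls_open: "\<And>\<rho> x0 \<epsilon>. \<rho> \<in> Q \<Longrightarrow> {x. \<rho> (x - x0) < \<epsilon>} \<in> induced_topology P"
  shows "induced_topology Q \<subseteq> induced_topology P"
proof
  fix U assume "U \<in> induced_topology Q"
  show "U \<in> induced_topology P"
    unfolding induced_topology_def
  proof (intro CollectI ballI)
    fix x0 assume "x0 \<in> U"
    then obtain J \<epsilon> where J: "finite J" "J \<subseteq> Q" "\<epsilon> > 0"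
      and JU: "{x. \<forall>\<rho>\<in>J. \<rho> (x - x0) < \<epsilon>} \<subseteq> U"
      using \<open>U \<in> induced_topology Q\<close> unfolding induced_topology_def by blast
    have "{x. \<forall>\<rho>\<in>J. \<rho> (x - x0) < \<epsilon>} = \<Inter>((\<lambda>\<rho>. {x. \<rho> (x - x0) < \<epsilon>}) ` J)"
      by auto
    also have "\<dots> \<in> induced_topology P"
      using J(1,2) balls_open by (intro Inter_in_induced_topology) blast+
    finally have V_open: "{x. \<forall>\<rho>\<in>J. \<rho> (x - x0) < \<epsilon>} \<in> induced_topology P" .
    have "x0 \<in> {x. \<forall>\<rho>\<in>J. \<rho> (x - x0) < \<epsilon>}"
    proof (intro CollectI ballI)
      fix \<rho> assume "\<rho> \<in> J"
      then have "\<rho> 0 = 0"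
        using J(2) zero by blast
      with J(3) show "\<rho> (x0 - x0) < \<epsilon>" by simp
    qed
    then obtain K \<delta> where K: "finite K" "K \<subseteq> P" "\<delta> > 0"
      and KV: "{x. \<forall>\<rho>\<in>K. \<rho> (x - x0) < \<delta>} \<subseteq> {x. \<forall>\<rho>\<in>J. \<rho> (x - x0) < \<epsilon>}"
      using V_open unfolding induced_topology_def by blast
    have KU: "{x. \<forall>\<rho>\<in>K. \<rho> (x - x0) < \<delta>} \<subseteq> U"
      using KV JU by (rule subset_trans)
    show "\<exists>K \<delta>. finite K \<and> K \<subseteq> P \<and> \<delta> > 0 \<and> {x. \<forall>\<rho>\<in>K. \<rho> (x - x0) < \<delta>} \<subseteq> U"
      by (intro exI[of _ K] exI[of _ \<delta>] conjI K KU)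
  qed
qed

lemma lc_topology_continuous_seminorms:
  "is_lc_topology s (induced_topology (continuous_seminorms s \<tau>))"
  unfolding is_lc_topology_def
  by (rule exI[of _ "continuous_seminorms s \<tau>"]) (simp add: continuous_seminorms_def)

lemma continuous_seminorms_topology_subset:
  assumes "vector_space s" "\<tau> = induced_topology P"
  shows "induced_topology (continuous_seminorms s \<tau>) \<subseteq> \<tau>"
proof -
  have "induced_topology (continuous_seminorms s \<tau>) \<subseteq> induced_topology P"
  proof (rule induced_topology_subset_if_balls_open)
    fix \<rho> assume "\<rho> \<in> continuous_seminorms s \<tau>"
    then have \<rho>: "seminorm s \<rho>" "\<And>x0 \<epsilon>. {x. \<rho> (x - x0) < \<epsilon>} \<in> \<tau>"
      unfolding continuous_seminorms_def by blast+
    show "\<rho> 0 = 0"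
      using assms(1) \<rho>(1) unfolding seminorm_def by (blast intro: ext_seminorm_zero)
    show "{x. \<rho> (x - x0) < \<epsilon>} \<in> induced_topology P" for x0 \<epsilon>
      using \<rho>(2) assms(2) by simp
  qed
  then show ?thesis
    using assms(2) by simp
qed

lemma lc_topology_subset_continuous_seminorms_topology:
  assumes "is_lc_topology s \<sigma>" "\<sigma> \<subseteq> \<tau>"
  shows "\<sigma> \<subseteq> induced_topology (continuous_seminorms s \<tau>)"
proof -
  obtain R where R: "\<forall>\<rho>\<in>R. seminorm s \<rho>" and \<sigma>: "\<sigma> = induced_topology R"
    using assms(1) unfolding is_lc_topology_def by blast
  have "{x. \<rho> (x - x0) < \<epsilon>} \<in> \<sigma>" if "\<rho> \<in> R" for \<rho> x0 \<epsilon>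
    unfolding \<sigma>
    by (rule ball_in_induced_topology[OF _ that])
      (use R that in \<open>simp add: seminorm_def ext_seminorm_def\<close>)
  then have "R \<subseteq> continuous_seminorms s \<tau>"
    using R assms(2) unfolding continuous_seminorms_def by auto
  then show ?thesis
    unfolding \<sigma> by (rule induced_topology_mono)
qed

lemma finest_lc_topology_below_elcs:
  assumes "vector_space s" "is_elcs s \<tau>"
  shows "\<exists>\<tau>F. is_lc_topology s \<tau>F \<and> \<tau>F \<subseteq> \<tau> \<and>
           (\<forall>\<sigma>. is_lc_topology s \<sigma> \<and> \<sigma> \<subseteq> \<tau> \<longrightarrow> \<sigma> \<subseteq> \<tau>F)"
proof (intro exI[of _ "induced_topology (continuous_seminorms s \<tau>)"] conjI allI impI)
  show "is_lc_topology s (induced_topology (continuous_seminorms s \<tau>))"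
    by (rule lc_topology_continuous_seminorms)
  obtain P where "\<tau> = induced_topology P"
    using assms(2) unfolding is_elcs_def by blast
  with assms(1) show "induced_topology (continuous_seminorms s \<tau>) \<subseteq> \<tau>"
    by (rule continuous_seminorms_topology_subset)
next
  fix \<sigma> assume "is_lc_topology s \<sigma> \<and> \<sigma> \<subseteq> \<tau>"
  then show "\<sigma> \<subseteq> induced_topology (continuous_seminorms s \<tau>)"
    by (intro lc_topology_subset_continuous_seminorms_topology) simp_all
qed

theorem theorem3p2:
  shows "(\<forall>(s :: real \<Rightarrow> 'a::ab_group_add \<Rightarrow> 'a) \<tau>. vector_space s \<and> is_elcs s \<tau> \<longrightarrow>
           (\<exists>\<tau>F. is_lc_topology s \<tau>F \<and> \<tau>F \<subseteq> \<tau> \<and>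
                 (\<forall>\<sigma>. is_lc_topology s \<sigma> \<and> \<sigma> \<subseteq> \<tau> \<longrightarrow> \<sigma> \<subseteq> \<tau>F))) \<and>
         (\<forall>(s :: complex \<Rightarrow> 'b::ab_group_add \<Rightarrow> 'b) \<tau>. vector_space s \<and> is_elcs s \<tau> \<longrightarrow>
           (\<exists>\<tau>F. is_lc_topology s \<tau>F \<and> \<tau>F \<subseteq> \<tau> \<and>
                 (\<forall>\<sigma>. is_lc_topology s \<sigma> \<and> \<sigma> \<subseteq> \<tau> \<longrightarrow> \<sigma> \<subseteq> \<tau>F)))"
  by (intro conjI allI impI; erule conjE; erule (1) finest_lc_topology_below_elcs)

end
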